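(* Let $\mathcal{A}$ be a finite alphabet with $\#\mathcal{A}\ge 2$ and let $\mathbf{p}$ be an irreducible pair on $\mathcal{A}$. Then the labeled Rauzy class of $\mathbf{p}$ contains a piece-wise order reversing pair.
   Context: Let $n=\#\mathcal{A}$. A pair on $\mathcal{A}$ is $\mathbf{p}=(p_0,p_1)$ with $p_0,p_1:\mathcal{A}\to\{1,\dots,n\}$ bijections ($p_\varepsilon$ is "row $\varepsilon$"; row $\varepsilon$ lists the letters $p_\varepsilon^{-1}(1),\dots,p_\varepsilon^{-1}(n)$ in order). $\mathbf{p}$ is irreducible if $p_0^{-1}\{1,\dots,k\}\neq p_1^{-1}\{1,\dots,k\}$ for every $1\le k<n$. For irreducible $\mathbf{p}$ and $\varepsilon\in\{0,1\}$, the Rauzy move of type $\varepsilon$ gives $\varepsilon\mathbf{p}=(p_0',p_1')$ with $p'_\varepsilon=p_\varepsilon$ and, writing $z=p_\varepsilon^{-1}(n)$: $p'_{1-\varepsilon}(b)=p_{1-\varepsilon}(b)$ if $p_{1-\varepsilon}(b)\le p_{1-\varepsilon}(z)$; $p'_{1-\varepsilon}(b)=p_{1-\varepsilon}(b)+1$ if $p_{1-\varepsilon}(z)<p_{1-\varepsilon}(b)<n$; $p'_{1-\varepsilon}(b)=p_{1-\varepsilon}(z)+1$ if $p_{1-\varepsilon}(b)=n$. These moves are bijections of the set of irreducible pairs. The labeled Rauzy class of $\mathbf{p}$ is the smallest set of irreducible pairs containing $\mathbf{p}$ and closed under both Rauzy moves (equivalently, the set of pairs reachable from $\mathbf{p}$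 by sequences of Rauzy moves). A pair is standard if $p_0^{-1}(1)=p_1^{-1}(n)$ and $p_1^{-1}(1)=p_0^{-1}(n)$. A standard pair $\mathbf{p}$ is piece-wise order reversing if there are integers $2=k_0<k_1<\dots<k_\ell=n$ such that for each $1\le i\le\ell$, $p_0^{-1}\{k_{i-1},\dots,k_i-1\}=p_1^{-1}\{k_{i-1},\dots,k_i-1\}$, and every $b$ with $k_{i-1}\le p_0(b)<k_i$ satisfies $p_0(b)+p_1(b)=k_{i-1}+k_i-1$. *)

theory Defs
  imports Main "HOL-Library.Cardinality"
begin

text \<open>Alphabet: a finite type 'a, n = CARD('a). A pair is (p0, p1) with
  p0, p1 : 'a -> {1..n} bijections.  Row eps is selected by a bool
  (False = row 0, True = row 1).\<close>

type_synonym 'a pair = "('a \<Rightarrow> nat) \<times> ('a \<Rightarrow> nat)"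

definition is_pair :: "('a::finite) pair \<Rightarrow> bool" where
  "is_pair p \<longleftrightarrow> bij_betw (fst p) UNIV {1..CARD('a)} \<and> bij_betw (snd p) UNIV {1..CARD('a)}"

definition irreducible :: "('a::finite) pair \<Rightarrow> bool" where
  "irreducible p \<longleftrightarrow> is_pair p \<and>
     (\<forall>k. 1 \<le> k \<and> k < CARD('a) \<longrightarrow> fst p -` {1..k} \<noteq> snd p -` {1..k})"

text \<open>Rauzy move of type e: row e is kept, the other row is modified.\<close>
definition rauzy_row :: "('a::finite \<Rightarrow> nat) \<Rightarrow> ('a \<Rightarrow> nat) \<Rightarrow> ('a \<Rightarrow> nat)" where
  "rauzy_row pe q = (let n = CARD('a); z = inv pe n in
     (\<lambda>b. if q b \<le> q z then q b
          else if q b < n then q b + 1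
          else q z + 1))"

definition rauzy_move :: "bool \<Rightarrow> ('a::finite) pair \<Rightarrow> 'a pair" where
  "rauzy_move e p = (if e then (rauzy_row (snd p) (fst p), snd p)
                     else (fst p, rauzy_row (fst p) (snd p)))"

inductive_set rauzy_class :: "('a::finite) pair \<Rightarrow> 'a pair set" for p where
  base: "p \<in> rauzy_class p"
| step: "q \<in> rauzy_class p \<Longrightarrow> rauzy_move e q \<in> rauzy_class p"

definition standard :: "('a::finite) pair \<Rightarrow> bool" where
  "standard p \<longleftrightarrow> inv (fst p) 1 = inv (snd p) CARD('a) \<and> inv (snd p) 1 = inv (fst p) CARD('a)"

definition piecewise_order_reversing :: "('a::finite) pair \<Rightarrow> bool" where
  "piecewise_order_reversing p \<longleftrightarrow> standard p \<and>
     (\<exists>l (k :: nat \<Rightarrow> nat). k 0 = 2 \<and> k l = CARD('a) \<and> (\<forall>i<l. k i < k (Suc i)) \<and>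
        (\<forall>i. 1 \<le> i \<and> i \<le> l \<longrightarrow>
           fst p -` {k (i-1)..<k i} = snd p -` {k (i-1)..<k i} \<and>
           (\<forall>b. k (i-1) \<le> fst p b \<and> fst p b < k i \<longrightarrow> fst p b + snd p b = k (i-1) + k i - 1)))"

end

theory Submission
  imports Defs "HOL-Library.Multiset"
begin

text \<open>Encode each row by the list of letters it enumerates. A Rauzy move of type \<open>\<epsilon>\<close> moves the
  last letter of row \<open>1 - \<epsilon>\<close> to just behind the occurrence of the last letter \<open>z\<close> of row \<open>\<epsilon>\<close>, so
  iterating it rotates the segment of row \<open>1 - \<epsilon>\<close> after \<open>z\<close> cyclically. With such rotations
  one first reaches a standard pair \<open>(a w c, c w' a)\<close>, by induction on the position in the
  bottom row of the last letter of the top row; irreducibility supplies at every stage the letter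
  that can be rotated to the end. On standard pairs, four rotations interchange two blocks \<open>A x\<close>
  and \<open>B y\<close> of \<open>w\<close> and the corresponding blocks \<open>U x\<close> and \<open>V y\<close> of \<open>w'\<close>. These block
  interchanges turn any two arrangements \<open>w, w'\<close> of the same letters into \<open>B\<^sub>1 \<dots> B\<^sub>l\<close> and
  \<open>rev B\<^sub>1 \<dots> rev B\<^sub>l\<close>, and the resulting standard pair is piecewise order reversing with
  the block boundaries as the \<open>k\<^sub>i\<close>.\<close>

section \<open>Rows encoded by lists\<close>

fun index :: "'a list \<Rightarrow> 'a \<Rightarrow> nat" where
  "index [] b = 0"
| "index (x # xs) b = (if x = b then 0 else Suc (index xs b))"

lemma index_append: "index (xs @ ys) b = (if b \<in> set xs then index xs b else length xs + index ys b)"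
  by (induction xs) auto

lemma index_less_length: "b \<in> set xs \<Longrightarrow> index xs b < length xs"
  by (induction xs) auto

lemma nth_index: "b \<in> set xs \<Longrightarrow> xs ! index xs b = b"
  by (induction xs) auto

lemma index_nth: "distinct xs \<Longrightarrow> i < length xs \<Longrightarrow> index xs (xs ! i) = i"
  by (induction xs arbitrary: i) (auto simp: nth_Cons split: nat.split)

lemma index_rev: "distinct xs \<Longrightarrow> b \<in> set xs \<Longrightarrow> index (rev xs) b = length xs - 1 - index xs b"
  by (induction xs) (auto simp: index_append dest: index_less_length)

lemma in_set_take_iff_index_less: "k \<le> length xs \<Longrightarrow> b \<in> set (take k xs) \<longleftrightarrow> index xs b < k"
proof (induction xs arbitrary: k)
  case (Cons x xs)
  then show ?case by (cases k) auto
qed simp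

definition row_of :: "'a list \<Rightarrow> 'a \<Rightarrow> nat" where
  "row_of L b = Suc (index L b)"

definition full_list :: "('a::finite) list \<Rightarrow> bool" where
  "full_list L \<longleftrightarrow> distinct L \<and> set L = UNIV"

lemma length_full_list: "full_list (L :: ('a::finite) list) \<Longrightarrow> length L = CARD('a)"
  unfolding full_list_def using distinct_card by fastforce

lemma full_list_mset_eq: "full_list L \<Longrightarrow> mset L' = mset L \<Longrightarrow> full_list L'"
  unfolding full_list_def by (metis mset_eq_imp_distinct_iff mset_eq_setD)

lemma set_full_list_append: "full_list (xs @ ys) \<Longrightarrow> set xs = - set ys"
  unfolding full_list_def by auto

lemma set_butlast_full_list:
  assumes "full_list K" "K \<noteq> []"
  shows "set (butlast K) = - {last K}"
proof -
  have "full_list (butlast K @ [last K])" using assms by simp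
  from set_full_list_append[OF this] show ?thesis by simp
qed

lemma inv_row_of:
  assumes "full_list L" "1 \<le> i" "i \<le> length L"
  shows "inv (row_of L) i = L ! (i - 1)"
proof -
  have "inj (row_of L)"
    using assms(1) unfolding full_list_def row_of_def inj_def by (metis UNIV_I nat.inject nth_index)
  moreover have "row_of L (L ! (i - 1)) = i"
    using assms unfolding row_of_def full_list_def by (simp add: index_nth)
  ultimately show ?thesis by (metis inv_f_f)
qed

lemma row_of_vimage_atLeastAtMost:
  "k \<le> length L \<Longrightarrow> row_of L -` {1..k} = set (take k L)"
  by (auto simp: row_of_def in_set_take_iff_index_less Suc_le_eq)

lemma row_of_in_block:
  assumes "distinct (P @ B @ E)" "b \<in> set B"
  shows "row_of (P @ B @ E) b = length P + row_of B b"
  using assms by (auto simp: row_of_def index_append)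

lemma row_of_in_block_iff:
  assumes "distinct (P @ B @ E)"
  shows "row_of (P @ B @ E) b \<in> {Suc (length P)..<Suc (length P + length B)} \<longleftrightarrow> b \<in> set B"
  using assms index_less_length[of b P] index_less_length[of b B]
  by (auto simp: row_of_def index_append)

lemma exists_full_list_row_of:
  fixes f :: "'a::finite \<Rightarrow> nat"
  assumes "bij_betw f UNIV {1..CARD('a)}"
  shows "\<exists>L. full_list L \<and> row_of L = f"
proof -
  define L where "L = map (inv f) [1..<Suc CARD('a)]"
  have inv_bij: "bij_betw (inv f) {1..CARD('a)} UNIV"
    using bij_betw_inv_into[OF assms] by simp
  have range: "set [1..<Suc CARD('a)] = {1..CARD('a)}" by auto
  have "full_list L"
    using inv_bij unfolding L_def full_list_def distinct_map set_map range bij_betw_def by simp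
  moreover have "row_of L b = f b" for b
  proof -
    have fb: "f b \<in> {1..CARD('a)}" using assms unfolding bij_betw_def by auto
    then have "L ! (f b - 1) = b"
      using bij_betw_inv_into_left[OF assms] unfolding L_def by (auto simp del: upt_Suc)
    then have "index L b = f b - 1"
      using index_nth[of L "f b - 1"] \<open>full_list L\<close> fb unfolding full_list_def L_def by auto
    then show ?thesis unfolding row_of_def using fb by simp
  qed
  ultimately show ?thesis by blast
qed

section \<open>Rauzy moves on lists\<close>

lemma rauzy_row_row_of:
  assumes K: "full_list K" "K \<noteq> []" "last K = z" and L: "full_list (u @ z # v @ [y])"
  shows "rauzy_row (row_of K) (row_of (u @ z # v @ [y])) = row_of (u @ z # y # v)"
proof -
  have n: "length (u @ z # v @ [y]) = CARD('a)" using length_full_list[OF L] .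
  have last: "inv (row_of K) CARD('a) = z"
    using inv_row_of[OF K(1), of "length K"] K length_full_list[OF K(1)]
    by (simp add: last_conv_nth Suc_leI)
  have d: "distinct (u @ z # v @ [y])" and all: "b \<in> set u \<or> b = z \<or> b = y \<or> b \<in> set v" for b
    using L unfolding full_list_def by auto
  show ?thesis
  proof
    fix b
    show "rauzy_row (row_of K) (row_of (u @ z # v @ [y])) b = row_of (u @ z # y # v) b"
      using all[of b] d n index_less_length[of b u] index_less_length[of b v]
      unfolding rauzy_row_def Let_def last row_of_def by (auto simp: index_append)
  qed
qed

definition rows :: "bool \<Rightarrow> ('a::finite) list \<Rightarrow> 'a list \<Rightarrow> 'a pair" where
  "rows e K L = (if e then (row_of L, row_of K) else (row_of K, row_of L))"

lemma rauzy_class_rotate: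
  assumes "rows e K (u @ z # v1 @ v2) \<in> rauzy_class p" "full_list (u @ z # v1 @ v2)"
    and K: "full_list K" "K \<noteq> []" "last K = z"
  shows "rows e K (u @ z # v2 @ v1) \<in> rauzy_class p"
  using assms(1,2)
proof (induction v2 arbitrary: v1 rule: rev_induct)
  case Nil
  then show ?case by simp
next
  case (snoc y v2)
  have "rauzy_move e (rows e K (u @ z # v1 @ v2 @ [y])) = rows e K (u @ z # (y # v1) @ v2)"
    using rauzy_row_row_of[OF K, of u "v1 @ v2" y] snoc.prems(2)
    by (simp add: rauzy_move_def rows_def)
  then have "rows e K (u @ z # (y # v1) @ v2) \<in> rauzy_class p"
    using rauzy_class.step[OF snoc.prems(1)[simplified]] by metis
  moreover have "full_list (u @ z # (y # v1) @ v2)"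
    using snoc.prems(2) by (rule full_list_mset_eq) simp
  ultimately show ?case using snoc.IH by simp
qed

lemma rauzy_class_rotate_bottom:
  "(row_of K, row_of (u @ z # v1 @ v2)) \<in> rauzy_class p \<Longrightarrow> full_list (u @ z # v1 @ v2) \<Longrightarrow>
    full_list K \<Longrightarrow> K \<noteq> [] \<Longrightarrow> last K = z \<Longrightarrow> (row_of K, row_of (u @ z # v2 @ v1)) \<in> rauzy_class p"
  using rauzy_class_rotate[of False] by (simp add: rows_def)

lemma rauzy_class_rotate_top:
  "(row_of (u @ z # v1 @ v2), row_of K) \<in> rauzy_class p \<Longrightarrow> full_list (u @ z # v1 @ v2) \<Longrightarrow>
    full_list K \<Longrightarrow> K \<noteq> [] \<Longrightarrow> last K = z \<Longrightarrow> (row_of (u @ z # v2 @ v1), row_of K) \<in> rauzy_class p"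
  using rauzy_class_rotate[of True] by (simp add: rows_def)

section \<open>Reaching a standard pair\<close>

definition irreducible_lists :: "'a list \<Rightarrow> 'a list \<Rightarrow> bool" where
  "irreducible_lists K L \<longleftrightarrow> (\<forall>k. 0 < k \<and> k < length K \<longrightarrow> set (take k K) \<noteq> set (take k L))"

lemma irreducible_lists_sym:
  "irreducible_lists K L \<Longrightarrow> length K = length L \<Longrightarrow> irreducible_lists L K"
  unfolding irreducible_lists_def by metis

lemma irreducible_lists_rows:
  assumes "irreducible (row_of K, row_of L)" "full_list K" "full_list L"
  shows "irreducible_lists K L"
  unfolding irreducible_lists_def
proof (intro allI impI)
  fix k :: nat assume k: "0 < k \<and> k < length K"
  have "length K = CARD('a)" "length L = CARD('a)"
    using assms(2,3) by (simp_all add: length_full_list)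
  then have "row_of K -` {1..k} \<noteq> row_of L -` {1..k}"
    using assms(1) k unfolding irreducible_def by auto
  then show "set (take k K) \<noteq> set (take k L)"
    using k \<open>length K = CARD('a)\<close> \<open>length L = CARD('a)\<close>
      row_of_vimage_atLeastAtMost[of k K] row_of_vimage_atLeastAtMost[of k L] by simp
qed

lemma irreducible_lists_rotate:
  assumes "irreducible_lists K (u @ z # v1 @ v2)" "distinct K" "K \<noteq> []" "last K = z"
  shows "irreducible_lists K (u @ z # v2 @ v1)"
  unfolding irreducible_lists_def
proof (intro allI impI)
  fix k assume k: "0 < k \<and> k < length K"
  show "set (take k K) \<noteq> set (take k (u @ z # v2 @ v1))"
  proof (cases "k \<le> length u")
    case True
    then show ?thesis using assms(1) k unfolding irreducible_lists_def by auto
  next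
    case False
    then obtain j where "k = length u + Suc j" by (metis add_Suc_right less_iff_Suc_add not_le)
    then have "z \<in> set (take k (u @ z # v2 @ v1))" by simp
    moreover have "z \<in> set (drop k K)"
      using k assms(3,4) by (metis drop_eq_Nil last_drop last_in_set leD)
    then have "z \<notin> set (take k K)"
      using set_take_disj_set_drop_if_distinct[OF assms(2)] by blast
    ultimately show ?thesis by auto
  qed
qed

lemma irreducible_lists_hd:
  assumes "irreducible_lists K L" "2 \<le> length K" "L \<noteq> []"
  shows "hd K \<noteq> hd L"
proof -
  have "set (take 1 K) \<noteq> set (take 1 L)"
    using assms(1,2) unfolding irreducible_lists_def by simp
  then show ?thesis using assms(2,3) by (cases K; cases L) auto
qed

lemma irreducible_lists_last:
  fixes K L :: "('a::finite) list"
  assumes "irreducible_lists K L" "full_list K" "full_list L" "2 \<le> CARD('a)"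
  shows "last K \<noteq> last L"
proof
  assume eq: "last K = last L"
  have n: "length K = CARD('a)" "length L = CARD('a)"
    using assms(2,3) by (simp_all add: length_full_list)
  then have ne: "K \<noteq> []" "L \<noteq> []" using assms(4) by auto
  have "set (take (CARD('a) - 1) K) \<noteq> set (take (CARD('a) - 1) L)"
    using assms(1,4) n unfolding irreducible_lists_def by simp
  moreover have "take (CARD('a) - 1) K = butlast K" "take (CARD('a) - 1) L = butlast L"
    using n by (simp_all add: butlast_conv_take)
  ultimately show False
    using eq set_butlast_full_list[OF assms(2) ne(1)] set_butlast_full_list[OF assms(3) ne(2)] by simp
qed

lemma hd_neq_last_full_list:
  fixes K :: "('a::finite) list"
  assumes "full_list K" "2 \<le> CARD('a)"
  shows "hd K \<noteq> last K"
proof (cases K)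
  case (Cons a t)
  then have "t \<noteq> []" using assms length_full_list[OF assms(1)] by auto
  then show ?thesis using assms(1) Cons unfolding full_list_def by auto
qed (use assms length_full_list[OF assms(1)] in auto)

lemma reach_standard_if_hd_after_last:
  assumes reached: "(row_of K, row_of L) \<in> rauzy_class p"
    and full: "full_list K" "full_list L"
    and L: "L = u @ last K # v" and "K \<noteq> []" "hd K \<in> set v" "hd L \<noteq> hd K"
  shows "\<exists>a c w w'. (row_of (a # w @ [c]), row_of (c # w' @ [a])) \<in> rauzy_class p
    \<and> full_list (a # w @ [c]) \<and> full_list (c # w' @ [a])"
proof -
  define a where "a = hd K"
  obtain t where K: "K = a # t" using \<open>K \<noteq> []\<close> unfolding a_def by (cases K) auto
  obtain v1 v2 where v: "v = v1 @ a # v2" using assms(6) unfolding a_def by (meson split_list)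
  define c where "c = hd L"
  define w' where "w' = tl (u @ last K # v2 @ v1)"
  have L': "u @ last K # v2 @ v1 @ [a] = c # w' @ [a]"
    unfolding c_def w'_def L by (cases u) auto
  have full_L': "full_list (c # w' @ [a])"
    using full(2) by (rule full_list_mset_eq) (simp add: L v flip: L')
  have reached1: "(row_of K, row_of (c # w' @ [a])) \<in> rauzy_class p"
    using rauzy_class_rotate_bottom[of K u "last K" "v1 @ [a]" v2 p] reached full \<open>K \<noteq> []\<close>
    by (simp add: L v flip: L')
  have "c \<noteq> a" "c \<in> set K"
    using assms(7) full(1) unfolding a_def c_def full_list_def by auto
  then obtain t1 t2 where t: "t = t1 @ c # t2" using K by (meson set_ConsD split_list)
  have "(row_of (a # t2 @ t1 @ [c]), row_of (c # w' @ [a])) \<in> rauzy_class p"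
    using rauzy_class_rotate_top[of "[]" a "t1 @ [c]" t2 "c # w' @ [a]" p] reached1 full(1) full_L'
    by (simp add: K t)
  moreover have "full_list (a # (t2 @ t1) @ [c])"
    using full(1) by (rule full_list_mset_eq) (simp add: K t)
  ultimately show ?thesis
    using full_L' by (intro exI[of _ a] exI[of _ c] exI[of _ "t2 @ t1"] exI[of _ w']) simp
qed

lemma irreducible_lists_witness:
  assumes irr: "irreducible_lists (s @ z1 # t) (u @ z # v)"
    and full: "full_list (s @ z1 # t)" "full_list (u @ z # v)"
    and "last (s @ z1 # t) = z" "z1 \<in> set v" "set s \<inter> set v = {}" "u \<noteq> []"
  shows "\<exists>g\<in>set t. g \<notin> set v \<and> g \<noteq> z"
proof (rule ccontr)
  assume "\<not> ?thesis"
  then have t: "set t \<subseteq> insert z (set v)" by auto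
  have "z \<notin> set v" using full(2) unfolding full_list_def by simp
  then have "z \<in> set t" using assms(4,5) by (cases t rule: rev_exhaust) auto
  have "set (z1 # t) = set (z # v)"
  proof
    show "set (z1 # t) \<subseteq> set (z # v)" using t assms(5) by auto
    show "set (z # v) \<subseteq> set (z1 # t)"
      using \<open>z \<in> set t\<close> assms(6) full(1) unfolding full_list_def by auto
  qed
  then have "set s = set u"
    using set_full_list_append[OF full(1)] set_full_list_append[OF full(2)] by simp
  then have len: "length s = length u"
    using full unfolding full_list_def by (metis distinct_append distinct_card)
  have "length u < length (s @ z1 # t)" using len by simp
  then have "set (take (length u) (s @ z1 # t)) \<noteq> set (take (length u) (u @ z # v))"
    using irr assms(7) unfolding irreducible_lists_def by blast
  moreover have "take (length u) (s @ z1 # t) = s" by (metis append_eq_conv_conj len)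
  moreover have "take (length u) (u @ z # v) = u" by simp
  ultimately show False using \<open>set s = set u\<close> by metis
qed

text \<open>Rotating the bottom row so that it ends with the letter \<open>z\<^sub>1\<close> of \<open>v\<close> occurring first in \<open>K\<close>,
  and then the top row so that it ends with a letter \<open>g\<close> of \<open>u\<close>, moves the last top letter
  strictly to the left in the bottom row.\<close>

lemma irreducible_lists_descent:
  assumes reached: "(row_of K, row_of (u @ z # v)) \<in> rauzy_class p"
    and full: "full_list K" "full_list (u @ z # v)"
    and irr: "irreducible_lists K (u @ z # v)"
    and K: "K \<noteq> []" "last K = z" and "u \<noteq> []" "v \<noteq> []"
  obtains K' L' where "(row_of K', row_of L') \<in> rauzy_class p" "full_list K'" "full_list L'"
    "irreducible_lists K' L'" "index L' (last K') < length u"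
proof -
  have "\<exists>x\<in>set K. x \<in> set v"
    using full(1) \<open>v \<noteq> []\<close> unfolding full_list_def by (metis UNIV_I last_in_set)
  then obtain s z1 t where K_eq: "K = s @ z1 # t" "z1 \<in> set v" "\<forall>y\<in>set s. y \<notin> set v"
    by (rule split_list_first_propE)
  obtain v1 v2 where v: "v = v1 @ z1 # v2" using K_eq(2) by (meson split_list)
  define L' where "L' = u @ z # v2 @ v1 @ [z1]"
  have full_v: "full_list (u @ z # (v1 @ [z1]) @ v2)" using full(2) by (simp add: v)
  have reached1: "(row_of K, row_of L') \<in> rauzy_class p"
    using rauzy_class_rotate_bottom[OF _ full_v full(1) K] reached unfolding L'_def by (simp add: v)
  have full_L': "full_list L'" using full_v unfolding L'_def by (rule full_list_mset_eq) simp
  have irr1: "irreducible_lists K L'"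
    using irreducible_lists_rotate[of K u z "v1 @ [z1]" v2] irr full(1) K
    unfolding L'_def full_list_def by (simp add: v)
  obtain g where g: "g \<in> set t" "g \<notin> set v" "g \<noteq> z"
    using irreducible_lists_witness[of s z1 t u z v] irr full K K_eq \<open>u \<noteq> []\<close> by auto
  obtain t1 t2 where t: "t = t1 @ g # t2" using g(1) by (meson split_list)
  define K' where "K' = s @ z1 # t2 @ t1 @ [g]"
  have full_t: "full_list (s @ z1 # (t1 @ [g]) @ t2)" using full(1) by (simp add: K_eq t)
  have last_L': "L' \<noteq> []" "last L' = z1" unfolding L'_def by simp_all
  have reached2: "(row_of K', row_of L') \<in> rauzy_class p"
    using rauzy_class_rotate_top[OF _ full_t full_L' last_L'] reached1 unfolding K'_def by (simp add: K_eq t)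
  have full_K': "full_list K'" using full_t unfolding K'_def by (rule full_list_mset_eq) simp
  have len: "length K' = length L'"
    using full_K' full_L' by (simp add: length_full_list)
  have "length K = length L'" using full(1) full_L' by (simp add: length_full_list)
  then have "irreducible_lists L' (s @ z1 # (t1 @ [g]) @ t2)"
    using irreducible_lists_sym[OF irr1] by (simp add: K_eq t)
  then have "irreducible_lists L' K'"
    using irreducible_lists_rotate[of L' s z1 "t1 @ [g]" t2] full_L' last_L'
    unfolding K'_def full_list_def by simp
  then have irr2: "irreducible_lists K' L'" using irreducible_lists_sym len by metis
  have "g \<in> set u" using g full(2) unfolding full_list_def by auto
  then have "index L' (last K') < length u"
    unfolding K'_def L'_def by (simp add: index_append index_less_length)
  then show thesis using that reached2 full_K' full_L' irr2 by blast
qed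

lemma reach_standard_pair:
  fixes K L :: "('a::finite) list"
  assumes "2 \<le> CARD('a)"
  shows "(row_of K, row_of L) \<in> rauzy_class p \<Longrightarrow> full_list K \<Longrightarrow> full_list L \<Longrightarrow>
    irreducible_lists K L \<Longrightarrow> \<exists>a c w w'. (row_of (a # w @ [c]), row_of (c # w' @ [a])) \<in> rauzy_class p
      \<and> full_list (a # w @ [c]) \<and> full_list (c # w' @ [a])"
proof (induction "index L (last K)" arbitrary: K L rule: less_induct)
  case less
  have "K \<noteq> []" "2 \<le> length K" using less.prems(2) assms by (auto dest: length_full_list)
  then obtain a t where K: "K = a # t" by (cases K) auto
  obtain u v where L: "L = u @ last K # v"
    using less.prems(3) unfolding full_list_def by (metis UNIV_I split_list)
  have index: "index L (last K) = length u"
    using less.prems(3) unfolding L full_list_def by (simp add: index_append)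
  have "v \<noteq> []" using irreducible_lists_last[OF less.prems(4,2,3) assms] L by auto
  have hd: "a \<noteq> hd L" using irreducible_lists_hd[OF less.prems(4)] \<open>2 \<le> length K\<close> K L by simp
  show ?case
  proof (cases "a \<in> set v")
    case True
    then show ?thesis
      using reach_standard_if_hd_after_last[OF less.prems(1-3) L \<open>K \<noteq> []\<close>] hd K by simp
  next
    case False
    have "a \<noteq> last K" using hd_neq_last_full_list[OF less.prems(2) assms] K by simp
    moreover have "a \<in> set L" using less.prems(3) unfolding full_list_def by simp
    ultimately have "u \<noteq> []" using False by (auto simp: L)
    obtain K' L' where K'L': "(row_of K', row_of L') \<in> rauzy_class p" "full_list K'"
      "full_list L'" "irreducible_lists K' L'" and less: "index L' (last K') < index L (last K)"
      by (rule irreducible_lists_descent[of K u "last K" v p])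
        (use less.prems \<open>K \<noteq> []\<close> \<open>u \<noteq> []\<close> \<open>v \<noteq> []\<close> index in \<open>simp_all flip: L\<close>)
    show ?thesis using less.hyps[OF less K'L'] .
  qed
qed

section \<open>Block interchanges\<close>

lemma filter_eq_append_conv_ex:
  "filter P L = xs @ ys \<Longrightarrow> \<exists>us vs. L = us @ vs \<and> filter P us = xs \<and> filter P vs = ys"
proof (induction xs arbitrary: L)
  case Nil
  then show ?case by (intro exI[of _ "[]"] exI[of _ L]) simp
next
  case (Cons x xs)
  then obtain us0 vs0 where "L = us0 @ x # vs0" "\<forall>u\<in>set us0. \<not> P u" "P x" "xs @ ys = filter P vs0"
    using filter_eq_ConsD[of P L x "xs @ ys"] by auto
  moreover obtain us1 vs1 where "vs0 = us1 @ vs1" "filter P us1 = xs" "filter P vs1 = ys"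
    using Cons.IH calculation(4) by metis
  ultimately show ?case by (intro exI[of _ "us0 @ x # us1"] exI[of _ vs1]) (simp add: filter_empty_conv)
qed

lemma filter_eq_append_Cons_conv_ex:
  assumes "filter P L = xs @ x # ys"
  shows "\<exists>us vs. L = us @ x # vs \<and> filter P us = xs \<and> filter P vs = ys"
proof -
  obtain us0 vs0 where L: "L = us0 @ vs0" "filter P us0 = xs" "filter P vs0 = x # ys"
    using filter_eq_append_conv_ex[OF assms] by blast
  then obtain us1 vs where "vs0 = us1 @ x # vs" "\<forall>u\<in>set us1. \<not> P u" "ys = filter P vs"
    using filter_eq_ConsD[OF L(3)] by blast
  with L show ?thesis by (intro exI[of _ "us0 @ us1"] exI[of _ vs]) (simp add: filter_empty_conv)
qed

inductive block_interchange :: "'a list \<times> 'a list \<Rightarrow> 'a list \<times> 'a list \<Rightarrow> bool" where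
  "block_interchange (A @ x # B @ y # C, U @ x # V @ y # W) (B @ y # A @ x # C, V @ y # U @ x # W)"

lemma block_interchange_mset:
  "block_interchange (v, v') (u, u') \<Longrightarrow> mset u = mset v \<and> mset u' = mset v'"
  by (erule block_interchange.cases) (simp add: ac_simps)

lemma block_interchanges_mset:
  "block_interchange\<^sup>*\<^sup>* (v, v') (u, u') \<Longrightarrow> mset u = mset v \<and> mset u' = mset v'"
  by (induction rule: rtranclp_induct2) (auto dest: block_interchange_mset)

lemma block_interchange_append:
  assumes "block_interchange (v, v') (u, u')"
  shows "block_interchange (v @ S, v' @ S') (u @ S, u' @ S')"
  using assms
proof cases
  case (1 A x B y C U V W)
  then show ?thesis using block_interchange.intros[of A x B y "C @ S" U V "W @ S'"] by simp
qed

lemma block_interchanges_append: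
  "block_interchange\<^sup>*\<^sup>* (v, v') (u, u') \<Longrightarrow> block_interchange\<^sup>*\<^sup>* (v @ S, v' @ S') (u @ S, u' @ S')"
  by (induction rule: rtranclp_induct2) (auto intro: rtranclp.rtrancl_into_rtrancl block_interchange_append)

lemma block_interchange_insert_last:
  assumes "block_interchange (v, v') (u, u')" "filter (\<lambda>z. z \<noteq> e) w' = v'"
  shows "\<exists>u''. block_interchange (v @ [e], w') (u @ [e], u'') \<and> filter (\<lambda>z. z \<noteq> e) u'' = u'"
  using assms(1)
proof cases
  case (1 A x B y C U V W)
  have "x \<in> set (filter (\<lambda>z. z \<noteq> e) w')" "y \<in> set (filter (\<lambda>z. z \<noteq> e) w')"
    using assms(2) 1 by simp_all
  then have xy: "x \<noteq> e" "y \<noteq> e" by auto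
  obtain U' rest where w': "w' = U' @ x # rest" "filter (\<lambda>z. z \<noteq> e) U' = U"
    and rest: "filter (\<lambda>z. z \<noteq> e) rest = V @ y # W"
    using filter_eq_append_Cons_conv_ex[of "\<lambda>z. z \<noteq> e" w' U x "V @ y # W"] assms(2) 1 by auto
  obtain V' W' where "rest = V' @ y # W'" "filter (\<lambda>z. z \<noteq> e) V' = V" "filter (\<lambda>z. z \<noteq> e) W' = W"
    using filter_eq_append_Cons_conv_ex[OF rest] by blast
  then show ?thesis
    using xy w' 1 block_interchange.intros[of A x B y "C @ [e]" U' V' W']
    by (intro exI[of _ "V' @ y # U' @ x # W'"]) simp
qed

lemma block_interchanges_insert_last:
  assumes "block_interchange\<^sup>*\<^sup>* (v, v') (u, u')" "filter (\<lambda>z. z \<noteq> e) w' = v'"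
  shows "\<exists>u''. block_interchange\<^sup>*\<^sup>* (v @ [e], w') (u @ [e], u'') \<and> filter (\<lambda>z. z \<noteq> e) u'' = u'"
  using assms(1)
proof (induction rule: rtranclp_induct2)
  case refl
  then show ?case using assms(2) by blast
next
  case (step u1 u1' u2 u2')
  then obtain t where t: "block_interchange\<^sup>*\<^sup>* (v @ [e], w') (u1 @ [e], t)"
    "filter (\<lambda>z. z \<noteq> e) t = u1'" by blast
  then obtain t' where "block_interchange (u1 @ [e], t) (u2 @ [e], t')"
    "filter (\<lambda>z. z \<noteq> e) t' = u2'"
    using block_interchange_insert_last[OF step.hyps(2)] by blast
  then show ?case using t(1) by (blast intro: rtranclp.rtrancl_into_rtrancl)
qed

lemma block_interchanges_reversed_block_inside:
  assumes "L \<noteq> []"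
  shows "\<exists>P P' S. S \<noteq> [] \<and>
    block_interchange\<^sup>*\<^sup>* (A @ x # B @ L @ [e], X @ e # x # us @ rev L) (P @ S, P' @ rev S)"
proof -
  obtain r T where L: "L = r # T" using assms by (cases L) auto
  show ?thesis
  proof (cases T)
    case Nil
    have "block_interchange (A @ x # B @ [r, e], X @ e # x # us @ [r])
        ((B @ r # A) @ [x, e], (us @ r # X) @ rev [x, e])"
      using block_interchange.intros[of A x B r "[e]" "X @ [e]" us "[]"] by simp
    then show ?thesis unfolding L Nil
      by (intro exI[of _ "B @ r # A"] exI[of _ "us @ r # X"] exI[of _ "[x, e]"] conjI r_into_rtranclp)
        simp_all
  next
    case (Cons s T')
    have "block_interchange (A @ x # B @ r # s # T' @ [e], X @ e # x # us @ rev T' @ [s, r])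
        (B @ r # A @ x # s # T' @ [e], us @ rev T' @ s # r # X @ [e, x])"
      using block_interchange.intros[of A x B r "s # T' @ [e]" "X @ [e]" "us @ rev T' @ [s]" "[]"] by simp
    moreover have "block_interchange (B @ r # A @ x # s # T' @ [e], us @ rev T' @ s # r # X @ [e, x])
        ((T' @ e # B @ r # A) @ [x, s], (r # X @ e # us @ rev T') @ rev [x, s])"
      using block_interchange.intros[of "B @ r # A @ [x]" s T' e "[]" "us @ rev T'" "r # X" "[x]"] by simp
    ultimately show ?thesis unfolding L Cons
      by (intro exI[of _ "T' @ e # B @ r # A"] exI[of _ "r # X @ e # us @ rev T'"] exI[of _ "[x, s]"]
          conjI rtranclp.rtrancl_into_rtrancl[OF r_into_rtranclp]) simp_all
  qed
qed

lemma block_interchanges_reversed_suffix: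
  assumes XY: "X @ Y = P0' @ rev L" and "set P0' \<subseteq> set P0" "L \<noteq> []"
  shows "\<exists>P P' S. S \<noteq> [] \<and> block_interchange\<^sup>*\<^sup>* (P0 @ L @ [e], X @ e # Y) (P @ S, P' @ rev S)"
proof -
  obtain us where "X = P0' @ us \<and> us @ Y = rev L \<or> X @ us = P0' \<and> Y = us @ rev L"
    using XY by (auto simp: append_eq_append_conv2)
  then consider (last) "X = P0'" "Y = rev L"
    | (straddle) T x where "X = P0' @ rev T @ [x]" "L = rev Y @ x # T"
    | (inside) x us' where "P0' = X @ x # us'" "Y = x # us' @ rev L"
  proof (elim disjE conjE)
    assume X: "X = P0' @ us" and "us @ Y = rev L"
    then have L: "L = rev Y @ rev us" by (metis rev_append rev_rev_ident)
    show thesis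
    proof (cases us rule: rev_exhaust)
      case Nil
      then show thesis using that(1) X L by simp
    next
      case (snoc T' x)
      then show thesis using that(2)[of "rev T'" x] X L by simp
    qed
  next
    assume "X @ us = P0'" "Y = us @ rev L"
    then show thesis using that(1,3) by (cases us) auto
  qed
  then show ?thesis
  proof cases
    case last
    then show ?thesis by (intro exI[of _ P0] exI[of _ P0'] exI[of _ "L @ [e]"]) simp
  next
    case (straddle T x)
    have "block_interchange (P0 @ L @ [e], X @ e # Y) (T @ e # P0 @ rev Y @ [x], e # P0' @ rev T @ x # Y)"
      using block_interchange.intros[of "P0 @ rev Y" x T e "[]" "P0' @ rev T" "[]" Y] straddle by simp
    then show ?thesis
      by (intro exI[of _ "T @ e # P0"] exI[of _ "e # P0' @ rev T"] exI[of _ "rev Y @ [x]"]) auto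
  next
    case (inside x us')
    then obtain A B where "P0 = A @ x # B" using assms(2) by (meson in_set_conv_decomp subsetD)
    then show ?thesis using block_interchanges_reversed_block_inside[OF assms(3)] inside by simp
  qed
qed

lemma block_interchanges_reversed_last_block:
  assumes w0: "block_interchange\<^sup>*\<^sup>* (w0, filter (\<lambda>z. z \<noteq> e) w') (concat Bs, concat (map rev Bs))"
    and "\<forall>B\<in>set Bs. B \<noteq> []" "distinct w'" "e \<in> set w'"
  shows "\<exists>P P' S. S \<noteq> [] \<and> block_interchange\<^sup>*\<^sup>* (w0 @ [e], w') (P @ S, P' @ rev S)"
proof -
  obtain v' where v': "block_interchange\<^sup>*\<^sup>* (w0 @ [e], w') (concat Bs @ [e], v')"
    "filter (\<lambda>z. z \<noteq> e) v' = concat (map rev Bs)"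
    using block_interchanges_insert_last[OF w0 refl] by blast
  have "mset v' = mset w'" using block_interchanges_mset[OF v'(1)] by simp
  then have "distinct v'" "e \<in> set v'"
    using assms(3,4) by (metis mset_eq_imp_distinct_iff, metis mset_eq_setD)
  then obtain X Y where v'_eq: "v' = X @ e # Y" "e \<notin> set X" "e \<notin> set Y"
    by (auto dest: split_list)
  then have "filter (\<lambda>z. z \<noteq> e) X = X" "filter (\<lambda>z. z \<noteq> e) Y = Y" by (auto simp: filter_id_conv)
  then have XY: "X @ Y = concat (map rev Bs)" using v'(2) v'_eq(1) by simp
  show ?thesis
  proof (cases Bs rule: rev_exhaust)
    case Nil
    then show ?thesis using v'(1) v'_eq(1) XY
      by (intro exI[of _ "[]"] exI[of _ "[]"] exI[of _ "[e]"]) simp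
  next
    case (snoc Bs0 L)
    then have "L \<noteq> []" using assms(2) by simp
    then obtain P P' S where PS: "S \<noteq> []"
      "block_interchange\<^sup>*\<^sup>* (concat Bs0 @ L @ [e], X @ e # Y) (P @ S, P' @ rev S)"
      using block_interchanges_reversed_suffix[of X Y "concat (map rev Bs0)" L "concat Bs0" e] XY snoc
      by auto
    moreover have "block_interchange\<^sup>*\<^sup>* (w0 @ [e], w') (concat Bs0 @ L @ [e], X @ e # Y)"
      using v'(1) v'_eq(1) snoc by simp
    ultimately show ?thesis by (blast intro: rtranclp_trans)
  qed
qed

text \<open>By induction the words without their last letter \<open>e\<close> are brought into reversed blocks;
  after reinserting \<open>e\<close>, one or two more interchanges produce a nonempty common suffix \<open>S\<close>
  reversed in the second word, and induction applies to what precedes \<open>S\<close>.\<close>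

lemma block_interchanges_to_reversed_blocks:
  "distinct w \<Longrightarrow> distinct w' \<Longrightarrow> set w = set w' \<Longrightarrow>
    \<exists>Bs. (\<forall>B\<in>set Bs. B \<noteq> []) \<and> block_interchange\<^sup>*\<^sup>* (w, w') (concat Bs, concat (map rev Bs))"
proof (induction "length w" arbitrary: w w' rule: less_induct)
  case less
  show ?case
  proof (cases w rule: rev_exhaust)
    case Nil
    then show ?thesis using less.prems by (intro exI[of _ "[]"]) simp
  next
    case (snoc w0 e)
    have "distinct w0" "e \<notin> set w0" "e \<in> set w'" using less.prems snoc by auto
    moreover have "set w0 = set (filter (\<lambda>z. z \<noteq> e) w')"
      using less.prems(3) snoc \<open>e \<notin> set w0\<close> by auto
    ultimately have "\<exists>Bs. (\<forall>B\<in>set Bs. B \<noteq> []) \<and>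
      block_interchange\<^sup>*\<^sup>* (w0, filter (\<lambda>z. z \<noteq> e) w') (concat Bs, concat (map rev Bs))"
      by (intro less.hyps) (use snoc less.prems(2) in simp_all)
    then obtain Bs where Bs: "\<forall>B\<in>set Bs. B \<noteq> []"
      "block_interchange\<^sup>*\<^sup>* (w0, filter (\<lambda>z. z \<noteq> e) w') (concat Bs, concat (map rev Bs))"
      by blast
    obtain P P' S where PS: "S \<noteq> []" "block_interchange\<^sup>*\<^sup>* (w, w') (P @ S, P' @ rev S)"
      using block_interchanges_reversed_last_block[OF Bs(2,1) less.prems(2) \<open>e \<in> set w'\<close>] snoc
      by auto
    have mset: "mset (P @ S) = mset w" "mset (P' @ rev S) = mset w'"
      using block_interchanges_mset[OF PS(2)] by simp_all
    then have "distinct (P @ S)" "distinct (P' @ rev S)" "set (P @ S) = set (P' @ rev S)"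
      using less.prems by (metis mset_eq_imp_distinct_iff, metis mset_eq_imp_distinct_iff,
          metis mset_eq_setD)
    then have "distinct P" "distinct P'" "set P = set P'" by auto
    moreover have "length (P @ S) = length w" using mset(1)[THEN arg_cong[of _ _ size]] by simp
    then have "length P < length w" using PS(1) by (cases S) auto
    ultimately obtain Bs' where Bs': "\<forall>B\<in>set Bs'. B \<noteq> []"
      "block_interchange\<^sup>*\<^sup>* (P, P') (concat Bs', concat (map rev Bs'))"
      using less.hyps[of P P'] by blast
    have "block_interchange\<^sup>*\<^sup>* (w, w') (concat Bs' @ S, concat (map rev Bs') @ rev S)"
      using rtranclp_trans[OF PS(2) block_interchanges_append[OF Bs'(2)]] .
    then show ?thesis using Bs'(1) PS(1) by (intro exI[of _ "Bs' @ [S]"]) simp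
  qed
qed

section \<open>Piecewise order reversing pairs in the Rauzy class\<close>

lemma rauzy_class_block_interchange:
  assumes reached: "(row_of (a # v @ [c]), row_of (c # v' @ [a])) \<in> rauzy_class p"
    and full: "full_list (a # v @ [c])" "full_list (c # v' @ [a])"
    and "block_interchange (v, v') (u, u')"
  shows "(row_of (a # u @ [c]), row_of (c # u' @ [a])) \<in> rauzy_class p"
  using assms(4)
proof cases
  case (1 A x B y C U V W)
  have "(row_of (a # A @ x # B @ y # C @ [c]), row_of (c # V @ y # W @ a # U @ [x])) \<in> rauzy_class p"
    using rauzy_class_rotate_bottom[of "a # v @ [c]" "[]" c "U @ [x]" "V @ y # W @ [a]" p]
      reached full 1 by simp
  moreover have full1: "full_list (c # V @ y # W @ a # U @ [x])"
    by (rule full_list_mset_eq[OF full(2)]) (simp add: 1 ac_simps)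
  ultimately have "(row_of (a # A @ x # C @ c # B @ [y]), row_of (c # V @ y # W @ a # U @ [x])) \<in> rauzy_class p"
    using rauzy_class_rotate_top[of "a # A" x "B @ [y]" "C @ [c]" "c # V @ y # W @ a # U @ [x]" p]
      full 1 by simp
  moreover have full2: "full_list (a # A @ x # C @ c # B @ [y])"
    by (rule full_list_mset_eq[OF full(1)]) (simp add: 1 ac_simps)
  ultimately have "(row_of (a # A @ x # C @ c # B @ [y]), row_of (c # V @ y # U @ x # W @ [a])) \<in> rauzy_class p"
    using rauzy_class_rotate_bottom[of "a # A @ x # C @ c # B @ [y]" "c # V" y "W @ [a]" "U @ [x]" p]
      full1 by simp
  moreover have "full_list (c # V @ y # U @ x # W @ [a])"
    by (rule full_list_mset_eq[OF full(2)]) (simp add: 1 ac_simps)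
  ultimately have "(row_of (a # B @ y # A @ x # C @ [c]), row_of (c # V @ y # U @ x # W @ [a])) \<in> rauzy_class p"
    using rauzy_class_rotate_top[of "[]" a "A @ x # C @ [c]" "B @ [y]" "c # V @ y # U @ x # W @ [a]" p]
      full2 by simp
  then show ?thesis using 1 by simp
qed

lemma rauzy_class_block_interchanges:
  assumes "block_interchange\<^sup>*\<^sup>* (v, v') (u, u')"
    and reached: "(row_of (a # v @ [c]), row_of (c # v' @ [a])) \<in> rauzy_class p"
    and full: "full_list (a # v @ [c])" "full_list (c # v' @ [a])"
  shows "(row_of (a # u @ [c]), row_of (c # u' @ [a])) \<in> rauzy_class p"
  using assms(1)
proof (induction rule: rtranclp_induct2)
  case refl
  then show ?case using reached .
next
  case (step u1 u1' u2 u2')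
  have "mset u1 = mset v" "mset u1' = mset v'" using block_interchanges_mset[OF step.hyps(1)] by simp_all
  then have "full_list (a # u1 @ [c])" "full_list (c # u1' @ [a])"
    by (simp_all add: full_list_mset_eq[OF full(1)] full_list_mset_eq[OF full(2)])
  then show ?case using rauzy_class_block_interchange[OF step.IH _ _ step.hyps(2)] by blast
qed

lemma row_of_reversed_block:
  assumes dK: "distinct (P @ B @ E)" and dL: "distinct (P' @ rev B @ E')"
    and len: "length P' = length P"
  shows "row_of (P @ B @ E) -` {Suc (length P)..<Suc (length P + length B)} = set B"
    and "row_of (P' @ rev B @ E') -` {Suc (length P)..<Suc (length P + length B)} = set B"
    and "b \<in> set B \<Longrightarrow>
      row_of (P @ B @ E) b + row_of (P' @ rev B @ E') b = Suc (length P) + Suc (length P + length B) - 1"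
proof -
  show "row_of (P @ B @ E) -` {Suc (length P)..<Suc (length P + length B)} = set B"
    unfolding vimage_def row_of_in_block_iff[OF dK] by simp
  show "row_of (P' @ rev B @ E') -` {Suc (length P)..<Suc (length P + length B)} = set B"
    unfolding vimage_def row_of_in_block_iff[OF dL, unfolded len length_rev set_rev] by simp
  assume b: "b \<in> set B"
  have "row_of (P @ B @ E) b = length P + Suc (index B b)"
    using row_of_in_block[OF dK b] unfolding row_of_def .
  moreover have "row_of (P' @ rev B @ E') b = length P + Suc (length B - 1 - index B b)"
    using row_of_in_block[OF dL, of b] index_rev[of B b] dK b len unfolding row_of_def by simp
  moreover have "index B b < length B" using index_less_length[OF b] .
  ultimately show "row_of (P @ B @ E) b + row_of (P' @ rev B @ E') b = Suc (length P) + Suc (length P + length B) - 1"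
    by simp
qed

lemma piecewise_order_reversing_reversed_blocks:
  fixes a c :: "'a::finite"
  assumes full: "full_list (a # concat Bs @ [c])" "full_list (c # concat (map rev Bs) @ [a])"
    and ne: "\<forall>B\<in>set Bs. B \<noteq> []"
  shows "piecewise_order_reversing (row_of (a # concat Bs @ [c]), row_of (c # concat (map rev Bs) @ [a]))"
proof -
  define K where "K = a # concat Bs @ [c]"
  define L where "L = c # concat (map rev Bs) @ [a]"
  have n: "CARD('a) = Suc (Suc (length (concat Bs)))"
    using length_full_list[OF full(1)] by simp
  have "standard (row_of K, row_of L)"
    using inv_row_of[OF full(1), of 1] inv_row_of[OF full(2), of 1]
      inv_row_of[OF full(1), of "CARD('a)"] inv_row_of[OF full(2), of "CARD('a)"]
    unfolding standard_def K_def L_def n by (simp add: nth_append length_concat comp_def)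
  define k where "k j = Suc (Suc (length (concat (take j Bs))))" for j
  have k_Suc: "k (Suc j) = k j + length (Bs ! j)" if "j < length Bs" for j
    using that unfolding k_def by (simp add: take_Suc_conv_app_nth)
  have blocks: "row_of K -` {k (i-1)..<k i} = row_of L -` {k (i-1)..<k i} \<and>
      (\<forall>b. k (i-1) \<le> row_of K b \<and> row_of K b < k i \<longrightarrow> row_of K b + row_of L b = k (i-1) + k i - 1)"
    if "1 \<le> i" "i \<le> length Bs" for i
  proof -
    define j where "j = i - 1"
    then have j: "j < length Bs" "i = Suc j" using that by auto
    define B T T' where "B = Bs ! j" and "T = concat (take j Bs)" and "T' = concat (map rev (take j Bs))"
    have Bs: "Bs = take j Bs @ B # drop (Suc j) Bs" unfolding B_def using j(1) by (simp add: id_take_nth_drop)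
    have K: "K = (a # T) @ B @ (concat (drop (Suc j) Bs) @ [c])"
      unfolding K_def T_def by (subst Bs) simp
    have L: "L = (c # T') @ rev B @ (concat (map rev (drop (Suc j) Bs)) @ [a])"
      unfolding L_def T'_def by (subst Bs) simp
    have len: "length (c # T') = length (a # T)" unfolding T_def T'_def by (simp add: length_concat comp_def)
    have k: "k j = Suc (length (a # T))" "k i = Suc (length (a # T) + length B)"
      unfolding j(2) k_Suc[OF j(1)] by (simp_all add: k_def T_def B_def)
    have "distinct ((a # T) @ B @ (concat (drop (Suc j) Bs) @ [c]))"
      "distinct ((c # T') @ rev B @ (concat (map rev (drop (Suc j) Bs)) @ [a]))"
      using full K L unfolding K_def L_def full_list_def by simp_all
    from row_of_reversed_block[OF this len, folded K L k]
    have vimage: "row_of K -` {k j..<k i} = set B" "row_of L -` {k j..<k i} = set B"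
      and sum: "\<And>b. b \<in> set B \<Longrightarrow> row_of K b + row_of L b = k j + k i - 1" by simp_all
    have "b \<in> set B" if "k j \<le> row_of K b" "row_of K b < k i" for b
      using that equalityD1[OF vimage(1)] by auto
    then show ?thesis unfolding j_def[symmetric] using vimage sum by simp
  qed
  have "k 0 = 2" "k (length Bs) = CARD('a)" "\<forall>i<length Bs. k i < k (Suc i)"
    using ne k_Suc unfolding k_def n by auto
  then have "piecewise_order_reversing (row_of K, row_of L)"
    unfolding piecewise_order_reversing_def using \<open>standard (row_of K, row_of L)\<close> blocks
    by (intro conjI exI[of _ "length Bs"] exI[of _ k]) auto
  then show ?thesis unfolding K_def L_def .
qed

theorem theorem3p1:
  fixes p :: "('a::finite) pair"
  assumes "CARD('a) \<ge> 2"
    and "irreducible p"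
  shows "\<exists>q \<in> rauzy_class p. piecewise_order_reversing q"
proof -
  obtain K L where KL: "full_list K" "full_list L" "p = (row_of K, row_of L)"
    using exists_full_list_row_of assms(2) unfolding irreducible_def is_pair_def
    by (metis prod.collapse)
  then have "irreducible_lists K L" using irreducible_lists_rows assms(2) by blast
  then obtain a c w w' where standard: "(row_of (a # w @ [c]), row_of (c # w' @ [a])) \<in> rauzy_class p"
      "full_list (a # w @ [c])" "full_list (c # w' @ [a])"
    using reach_standard_pair[OF assms(1)] rauzy_class.base[of p] KL by metis
  then have "distinct w" "distinct w'" "set w = set w'"
    unfolding full_list_def by (auto simp: set_eq_iff)
  then obtain Bs where Bs: "\<forall>B\<in>set Bs. B \<noteq> []"
    "block_interchange\<^sup>*\<^sup>* (w, w') (concat Bs, concat (map rev Bs))"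
    using block_interchanges_to_reversed_blocks by blast
  let ?q = "(row_of (a # concat Bs @ [c]), row_of (c # concat (map rev Bs) @ [a]))"
  have "?q \<in> rauzy_class p" using rauzy_class_block_interchanges[OF Bs(2) standard] .
  moreover have "full_list (a # concat Bs @ [c])" "full_list (c # concat (map rev Bs) @ [a])"
    using block_interchanges_mset[OF Bs(2)] standard(2,3) by (simp_all add: full_list_mset_eq)
  ultimately show ?thesis using piecewise_order_reversing_reversed_blocks Bs(1) by blast
qed

end
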